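(* Assume (OP). Let $C\subseteq M$ be such that $C\setminus P$ is $\operatorname{dcl}$-independent over $P$, and let $X\subseteq M^n$ be a set which is $\mathcal L$-definable and also $C$-definable. Then $X$ is $\mathcal L_C$-definable.
   Context: Let $\mathcal M=\langle M,<,+,0,\dots\rangle$ be an o-minimal expansion of an ordered group with a distinguished positive element $1$, in a language $\mathcal L$; $\operatorname{dcl}$ denotes definable closure in $\mathcal M$; "$\mathcal L$-definable" means definable in $\mathcal M$ with parameters, "$\mathcal L_A$-definable" with parameters from $A$. Fix $P\subseteq M$ and let $\widetilde{\mathcal M}=\langle\mathcal M,P\rangle$ be the expansion by a unary predicate for $P$; "$A$-definable" (unqualified) means definable in $\widetilde{\mathcal M}$ with parameters from $A\subseteq M$. A set $A$ is $\operatorname{dcl}$-independent over $P$ if no $a\in A$ lies in $\operatorname{dcl}((A\setminus\{a\})\cup P)$. $M^n$ has the product order topology. (OP): for every $A\subseteq M$ with $A\setminus P$ $\operatorname{dcl}$-independent over $P$ and every $A$-definable $V\subseteq M^n$, the topological closure $\overline V$ is $\mathcal L_A$-definable. *)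

theory Defs
  imports Complex_Main
begin

text \<open>A (relational) first-order structure on the universe of type 'a is given by a
language L: a set of pairs (arity, interpretation). Function and constant symbols are
represented by their graphs (this does not change the definable sets).
Tuples in M^n are lists of length n.\<close>

text \<open>The 0-definable (parameter-free) sets of the structure, defined semantically as the
closure of the basic relations and equalities under Boolean operations, existential
projection and substitution of variables (i.e. the sets defined by first-order formulas).\<close>
inductive fodef :: "(nat \<times> 'a list set) set \<Rightarrow> nat \<Rightarrow> 'a list set \<Rightarrow> bool" for L where
  basic: "(n, R) \<in> L \<Longrightarrow> fodef L n (R \<inter> {xs. length xs = n})"
| eq: "i < n \<Longrightarrow> j < n \<Longrightarrow> fodef L n {xs. length xs = n \<and> xs ! i = xs ! j}"
| compl: "fodef L n S \<Longrightarrow> fodef L n ({xs. length xs = n} - S)"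
| inter: "fodef L n S \<Longrightarrow> fodef L n T \<Longrightarrow> fodef L n (S \<inter> T)"
| proj: "fodef L (Suc n) S \<Longrightarrow> fodef L n {xs. \<exists>y. xs @ [y] \<in> S}"
| subst: "fodef L m S \<Longrightarrow> (\<forall>i<m. f i < n) \<Longrightarrow>
    fodef L n {xs. length xs = n \<and> map (\<lambda>i. xs ! (f i)) [0..<m] \<in> S}"

definition definable_over :: "(nat \<times> 'a list set) set \<Rightarrow> 'a set \<Rightarrow> nat \<Rightarrow> 'a list set \<Rightarrow> bool" where
  "definable_over L A n X \<longleftrightarrow>
     (\<exists>m Y as. fodef L (n + m) Y \<and> length as = m \<and> set as \<subseteq> A \<and>
        X = {xs. length xs = n \<and> xs @ as \<in> Y})"

definition dcl :: "(nat \<times> 'a list set) set \<Rightarrow> 'a set \<Rightarrow> 'a set" where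
  "dcl L A = {b. definable_over L A 1 {[b]}}"

definition dcl_indep :: "(nat \<times> 'a list set) set \<Rightarrow> 'a set \<Rightarrow> 'a set \<Rightarrow> bool" where
  "dcl_indep L A P \<longleftrightarrow> (\<forall>a\<in>A. a \<notin> dcl L ((A - {a}) \<union> P))"

definition expand :: "(nat \<times> 'a list set) set \<Rightarrow> 'a set \<Rightarrow> (nat \<times> 'a list set) set" where
  "expand L P = insert (1, {[p] | p. p \<in> P}) L"

definition order_open :: "'a::linorder set \<Rightarrow> bool" where
  "order_open = generate_topology (range lessThan \<union> range greaterThan)"

definition prod_closure :: "nat \<Rightarrow> 'a::linorder list set \<Rightarrow> 'a list set" where
  "prod_closure n V = {x. length x = n \<and>
     (\<forall>U. (\<forall>i<n. order_open (U i) \<and> x ! i \<in> U i) \<longrightarrow> (\<exists>y\<in>V. \<forall>i<n. y ! i \<in> U i))}"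

definition interval_or_point :: "'a::linorder set \<Rightarrow> bool" where
  "interval_or_point S \<longleftrightarrow> (\<exists>a. S = {a}) \<or> (\<exists>a b. S = {a<..<b}) \<or> (\<exists>a. S = {a<..}) \<or>
      (\<exists>b. S = {..<b}) \<or> S = UNIV"

definition o_minimal :: "(nat \<times> 'a::linorder list set) set \<Rightarrow> bool" where
  "o_minimal L \<longleftrightarrow> (\<forall>X. definable_over L UNIV 1 X \<longrightarrow>
     (\<exists>F. finite F \<and> (\<forall>I\<in>F. interval_or_point I) \<and> {x. [x] \<in> X} = \<Union>F))"

definition omin_group_expansion :: "(nat \<times> 'a::linordered_ab_group_add list set) set \<Rightarrow> 'a \<Rightarrow> bool" where
  "omin_group_expansion L one \<longleftrightarrow> 0 < one \<and>
     (2, {[x, y] | x y. x < y}) \<in> L \<and>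
     (3, {[x, y, x + y] | x y. True}) \<in> L \<and>
     (1, {[0]}) \<in> L \<and> (1, {[one]}) \<in> L \<and> o_minimal L"

definition OP :: "(nat \<times> 'a::linorder list set) set \<Rightarrow> 'a set \<Rightarrow> bool" where
  "OP L P \<longleftrightarrow> (\<forall>A n V. dcl_indep L (A - P) P \<longrightarrow> definable_over (expand L P) A n V \<longrightarrow>
      definable_over L A n (prod_closure n V))"

end

theory Submission
  imports Defs
begin

(* X is the fibre Y_b of a 0-definable family Y. The set B of parameters c with Y_c = X is
   L-definable, C-definable in the expansion, and contains b; so it suffices to find c in B
   with {c} L_C-definable, since then X = Y_c is L_C-definable. Splitting off the last
   coordinate reduces this to nonempty subsets s of M. By o-minimality s is a finite union of
   points and intervals, so its frontier is finite; by (OP) the frontier is L_C-definable,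
   hence contained in dcl(C). A point of s either lies on the frontier, or lies in a
   complementary interval of the frontier that is contained in s; its endpoints are in dcl(C)
   or infinite, and 0, l + 1, h - 1 or (l + h)/2 is a point of dcl(C) inside it. *)

section \<open>Definable sets\<close>

lemma fodef_length: "fodef L n S \<Longrightarrow> xs \<in> S \<Longrightarrow> length xs = n"
  by (induction arbitrary: xs rule: fodef.induct) fastforce+

lemma fodef_mono: "fodef L n S \<Longrightarrow> L \<subseteq> L' \<Longrightarrow> fodef L' n S"
  by (induction rule: fodef.induct) (auto intro: fodef.intros)

lemma definable_over_length: "definable_over L A n X \<Longrightarrow> xs \<in> X \<Longrightarrow> length xs = n"
  by (auto simp: definable_over_def)

lemma definable_over_mono:
  "definable_over L A n X \<Longrightarrow> L \<subseteq> L' \<Longrightarrow> A \<subseteq> A' \<Longrightarrow> definable_over L' A' n X"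
  unfolding definable_over_def by (fastforce intro: fodef_mono)

lemma fodef_imp_definable_over: "fodef L n Y \<Longrightarrow> definable_over L A n Y"
  unfolding definable_over_def
  by (intro exI[of _ 0] exI[of _ Y] exI[of _ "[]"]) (auto dest: fodef_length)

lemma definable_over_basic:
  "(n, R) \<in> L \<Longrightarrow> R \<subseteq> {xs. length xs = n} \<Longrightarrow> definable_over L A n R"
  using fodef_imp_definable_over[OF fodef.basic] by (metis inf.absorb1)

lemma definable_over_Nil: "definable_over L A 0 {[]}"
proof -
  have "fodef L (Suc 0) {xs. length xs = Suc 0}"
    using fodef.eq[where L = L and i = 0 and j = 0 and n = "Suc 0"] by simp
  then have "fodef L 0 {xs. \<exists>y. xs @ [y] \<in> {xs. length xs = Suc 0}}"
    by (rule fodef.proj)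
  moreover have "{xs. \<exists>y. xs @ [y] \<in> {xs. length xs = Suc 0}} = {[]}"
    by auto
  ultimately show ?thesis
    by (metis fodef_imp_definable_over)
qed

lemma definable_over_subst:
  assumes "definable_over L A m S" and "\<forall>i<m. f i < n"
  shows "definable_over L A n {xs. length xs = n \<and> map (\<lambda>i. xs ! f i) [0..<m] \<in> S}"
proof -
  obtain k Y as where Y: "fodef L (m + k) Y" "length as = k" "set as \<subseteq> A"
    and S: "S = {ys. length ys = m \<and> ys @ as \<in> Y}"
    using assms(1) unfolding definable_over_def by blast
  define g where "g i = (if i < m then f i else n + (i - m))" for i
  let ?Y = "{zs. length zs = n + k \<and> map (\<lambda>i. zs ! g i) [0..<m + k] \<in> Y}"
  have "fodef L (n + k) ?Y"
    by (rule fodef.subst[OF Y(1)]) (use assms(2) in \<open>auto simp: g_def\<close>)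
  moreover have "map (\<lambda>i. (xs @ as) ! g i) [0..<m + k] = map (\<lambda>i. xs ! f i) [0..<m] @ as"
    if "length xs = n" for xs
    by (rule nth_equalityI) (use that assms(2) Y(2) in \<open>auto simp: g_def nth_append\<close>)
  ultimately show ?thesis
    unfolding definable_over_def S using Y(2,3)
    by (intro exI[of _ k] exI[of _ ?Y] exI[of _ as]) auto
qed

lemma definable_over_diff:
  assumes "definable_over L A n S"
  shows "definable_over L A n ({xs. length xs = n} - S)"
proof -
  obtain k Y as where Y: "fodef L (n + k) Y" "length as = k" "set as \<subseteq> A"
    and S: "S = {ys. length ys = n \<and> ys @ as \<in> Y}"
    using assms unfolding definable_over_def by blast
  have "fodef L (n + k) ({xs. length xs = n + k} - Y)"
    by (rule fodef.compl[OF Y(1)])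
  then show ?thesis
    unfolding definable_over_def S using Y(2,3)
    by (intro exI[of _ k] exI[of _ "{xs. length xs = n + k} - Y"] exI[of _ as]) auto
qed

lemma definable_over_Int:
  assumes "definable_over L A n S" and "definable_over L A n T"
  shows "definable_over L A n (S \<inter> T)"
proof -
  obtain k1 Y as where Y: "fodef L (n + k1) Y" "length as = k1" "set as \<subseteq> A"
    and S: "S = {ys. length ys = n \<and> ys @ as \<in> Y}"
    using assms(1) unfolding definable_over_def by blast
  obtain k2 Z bs where Z: "fodef L (n + k2) Z" "length bs = k2" "set bs \<subseteq> A"
    and T: "T = {ys. length ys = n \<and> ys @ bs \<in> Z}"
    using assms(2) unfolding definable_over_def by blast
  define g where "g i = (if i < n then i else i + k1)" for i
  let ?Y = "{zs. length zs = n + (k1 + k2) \<and> map (\<lambda>i. zs ! i) [0..<n + k1] \<in> Y}"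
  let ?Z = "{zs. length zs = n + (k1 + k2) \<and> map (\<lambda>i. zs ! g i) [0..<n + k2] \<in> Z}"
  have "fodef L (n + (k1 + k2)) (?Y \<inter> ?Z)"
    using fodef.subst[OF Y(1), of id] fodef.subst[OF Z(1), of g]
    by (intro fodef.inter) (auto simp: g_def)
  moreover have "map (\<lambda>i. (xs @ as @ bs) ! i) [0..<n + k1] = xs @ as"
    and "map (\<lambda>i. (xs @ as @ bs) ! g i) [0..<n + k2] = xs @ bs" if "length xs = n" for xs
    by (rule nth_equalityI; use that Y(2) Z(2) in \<open>force simp: nth_append g_def\<close>)+
  ultimately show ?thesis
    unfolding definable_over_def S T using Y(2,3) Z(2,3)
    by (intro exI[of _ "k1 + k2"] exI[of _ "?Y \<inter> ?Z"] exI[of _ "as @ bs"]) auto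
qed

lemma definable_over_proj:
  assumes "definable_over L A (Suc n) S"
  shows "definable_over L A n {xs. \<exists>y. xs @ [y] \<in> S}"
proof -
  obtain k Y as where Y: "fodef L (Suc n + k) Y" "length as = k" "set as \<subseteq> A"
    and S: "S = {ys. length ys = Suc n \<and> ys @ as \<in> Y}"
    using assms unfolding definable_over_def by blast
  define g where "g i = (if i < n then i else if i = n then n + k else i - 1)" for i
  let ?Y = "{zs. length zs = Suc (n + k) \<and> map (\<lambda>i. zs ! g i) [0..<Suc n + k] \<in> Y}"
  have "fodef L (n + k) {xs. \<exists>y. xs @ [y] \<in> ?Y}"
    by (intro fodef.proj fodef.subst[OF Y(1)]) (auto simp: g_def)
  moreover have "map (\<lambda>i. (xs @ as @ [y]) ! g i) [0..<Suc n + k] = xs @ [y] @ as"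
    if "length xs = n" for xs y
    by (rule nth_equalityI) (use that Y(2) in \<open>auto simp: nth_append g_def simp del: upt_Suc\<close>)
  ultimately show ?thesis
    unfolding definable_over_def S using Y(2,3)
    by (intro exI[of _ k] exI[of _ "{xs. \<exists>y. xs @ [y] \<in> ?Y}"] exI[of _ as]) auto
qed

section \<open>Formulas with definable atoms\<close>

text \<open>Variable \<open>i\<close> denotes the \<open>i\<close>-th entry of the assignment; \<open>Ex\<close> binds a new last entry.\<close>

datatype 'a form =
  Rel "'a list set" "nat list" | Neg "'a form" | Conj "'a form" "'a form" | Ex "'a form"

fun sat :: "'a list \<Rightarrow> 'a form \<Rightarrow> bool" where
  "sat xs (Rel S is) \<longleftrightarrow> map ((!) xs) is \<in> S"
| "sat xs (Neg \<phi>) \<longleftrightarrow> \<not> sat xs \<phi>"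
| "sat xs (Conj \<phi> \<psi>) \<longleftrightarrow> sat xs \<phi> \<and> sat xs \<psi>"
| "sat xs (Ex \<phi>) \<longleftrightarrow> (\<exists>y. sat (xs @ [y]) \<phi>)"

fun form_over :: "(nat \<times> 'a list set) set \<Rightarrow> 'a set \<Rightarrow> nat \<Rightarrow> 'a form \<Rightarrow> bool" where
  "form_over L A n (Rel S is) \<longleftrightarrow> definable_over L A (length is) S \<and> (\<forall>i\<in>set is. i < n)"
| "form_over L A n (Neg \<phi>) \<longleftrightarrow> form_over L A n \<phi>"
| "form_over L A n (Conj \<phi> \<psi>) \<longleftrightarrow> form_over L A n \<phi> \<and> form_over L A n \<psi>"
| "form_over L A n (Ex \<phi>) \<longleftrightarrow> form_over L A (Suc n) \<phi>"

theorem definable_over_form: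
  "form_over L A n \<phi> \<Longrightarrow> definable_over L A n {xs. length xs = n \<and> sat xs \<phi>}"
proof (induction \<phi> arbitrary: n)
  case (Rel S "is")
  then have "definable_over L A n {xs. length xs = n \<and> map (\<lambda>i. xs ! (is ! i)) [0..<length is] \<in> S}"
    by (intro definable_over_subst) auto
  moreover have "map (\<lambda>i. xs ! (is ! i)) [0..<length is] = map ((!) xs) is" for xs :: "'a list"
    by (rule nth_equalityI) auto
  ultimately show ?case
    by simp
next
  case (Neg \<phi>)
  then have "definable_over L A n ({xs. length xs = n} - {xs. length xs = n \<and> sat xs \<phi>})"
    by (intro definable_over_diff) auto
  moreover have "{xs. length xs = n} - {xs. length xs = n \<and> sat xs \<phi>} =
      {xs. length xs = n \<and> sat xs (Neg \<phi>)}"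
    by auto
  ultimately show ?case
    by simp
next
  case (Conj \<phi> \<psi>)
  then have "definable_over L A n ({xs. length xs = n \<and> sat xs \<phi>} \<inter> {xs. length xs = n \<and> sat xs \<psi>})"
    by (intro definable_over_Int) auto
  then show ?case
    by (simp add: Collect_conj_eq[symmetric] conj_ac)
next
  case (Ex \<phi>)
  then have "definable_over L A n {xs. \<exists>y. xs @ [y] \<in> {zs. length zs = Suc n \<and> sat zs \<phi>}}"
    by (intro definable_over_proj) auto
  then show ?case
    by simp
qed

definition Iff :: "'a form \<Rightarrow> 'a form \<Rightarrow> 'a form" where
  "Iff \<phi> \<psi> = Conj (Neg (Conj \<phi> (Neg \<psi>))) (Neg (Conj \<psi> (Neg \<phi>)))"

fun Exs :: "nat \<Rightarrow> 'a form \<Rightarrow> 'a form" where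
  "Exs 0 \<phi> = \<phi>"
| "Exs (Suc k) \<phi> = Ex (Exs k \<phi>)"

lemma sat_Iff [simp]: "sat xs (Iff \<phi> \<psi>) \<longleftrightarrow> (sat xs \<phi> \<longleftrightarrow> sat xs \<psi>)"
  and form_over_Iff [simp]: "form_over L A n (Iff \<phi> \<psi>) \<longleftrightarrow> form_over L A n \<phi> \<and> form_over L A n \<psi>"
  by (auto simp: Iff_def)

lemma sat_Exs [simp]: "sat xs (Exs k \<phi>) \<longleftrightarrow> (\<exists>ys. length ys = k \<and> sat (xs @ ys) \<phi>)"
proof (induction k arbitrary: xs)
  case (Suc k)
  have "sat xs (Exs (Suc k) \<phi>) \<longleftrightarrow> (\<exists>y ys. length ys = k \<and> sat (xs @ y # ys) \<phi>)"
    using Suc by simp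
  also have "\<dots> \<longleftrightarrow> (\<exists>ys. length ys = Suc k \<and> sat (xs @ ys) \<phi>)"
    by (metis length_Suc_conv)
  finally show ?case .
qed simp

lemma form_over_Exs [simp]: "form_over L A n (Exs k \<phi>) \<longleftrightarrow> form_over L A (n + k) \<phi>"
  by (induction k arbitrary: n) auto

lemma map_nth_append_upt_left [simp]:
  "length xs = n \<Longrightarrow> map ((!) (xs @ ys)) [0..<n] = xs"
  by (rule nth_equalityI) (auto simp: nth_append)

lemma map_nth_append_upt_right [simp]:
  "length xs = n \<Longrightarrow> length ys = m \<Longrightarrow> map ((!) (xs @ ys)) [n..<n + m] = ys"
  by (rule nth_equalityI) (auto simp: nth_append)

lemma definable_over_fibre_left:
  assumes "definable_over L A (m + n) Y" and "definable_over L A m {cs}"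
  shows "definable_over L A n {xs. length xs = n \<and> cs @ xs \<in> Y}"
proof -
  have "length cs = m"
    using assms(2) by (simp add: definable_over_length)
  let ?\<phi> = "Exs m (Conj (Rel {cs} [n..<n + m]) (Rel Y ([n..<n + m] @ [0..<n])))"
  have "{xs. length xs = n \<and> sat xs ?\<phi>} = {xs. length xs = n \<and> cs @ xs \<in> Y}"
    using \<open>length cs = m\<close> by auto
  moreover have "definable_over L A n {xs. length xs = n \<and> sat xs ?\<phi>}"
    by (rule definable_over_form) (use assms in auto)
  ultimately show ?thesis
    by simp
qed

lemma definable_over_fibre_right:
  assumes "definable_over L A (n + m) Y" and "definable_over L A m {cs}"
  shows "definable_over L A n {xs. length xs = n \<and> xs @ cs \<in> Y}"
proof -
  have "length cs = m"
    using assms(2) by (simp add: definable_over_length)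
  let ?\<phi> = "Exs m (Conj (Rel {cs} [n..<n + m]) (Rel Y [0..<n + m]))"
  have "map ((!) (xs @ ys)) [0..<n + m] = xs @ ys"
    if "length xs = n" "length ys = m" for xs ys :: "'a list"
    using that map_nth[of "xs @ ys"] by simp
  then have "{xs. length xs = n \<and> sat xs ?\<phi>} = {xs. length xs = n \<and> xs @ cs \<in> Y}"
    using \<open>length cs = m\<close> by auto
  moreover have "definable_over L A n {xs. length xs = n \<and> sat xs ?\<phi>}"
    by (rule definable_over_form) (use assms in auto)
  ultimately show ?thesis
    by simp
qed

lemma definable_over_parameters:
  assumes "fodef L0 (n + m) Y" and "L0 \<subseteq> L" and "definable_over L A n X"
  shows "definable_over L A m {cs. length cs = m \<and> {xs. length xs = n \<and> xs @ cs \<in> Y} = X}"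
proof -
  let ?\<phi> = "Neg (Exs n (Neg (Iff (Rel Y ([m..<m + n] @ [0..<m])) (Rel X [m..<m + n]))))"
  have "X \<subseteq> {xs. length xs = n}"
    using assms(3) by (auto dest: definable_over_length)
  then have "{cs. length cs = m \<and> sat cs ?\<phi>} =
      {cs. length cs = m \<and> {xs. length xs = n \<and> xs @ cs \<in> Y} = X}"
    by auto
  moreover have "definable_over L A m {cs. length cs = m \<and> sat cs ?\<phi>}"
    using fodef_imp_definable_over[OF fodef_mono[OF assms(1,2)]] assms(3)
    by (intro definable_over_form) (auto simp: add.commute)
  ultimately show ?thesis
    by simp
qed

lemma definable_over_append:
  assumes "definable_over L A m {xs}" and "definable_over L A n {ys}"
  shows "definable_over L A (m + n) {xs @ ys}"
proof -
  have "length xs = m" "length ys = n"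
    using assms by (simp_all add: definable_over_length)
  moreover have "zs = xs @ ys"
    if "length zs = m + n" "map ((!) zs) [0..<m] = xs" "map ((!) zs) [m..<m + n] = ys" for zs
  proof -
    have "zs = map ((!) zs) [0..<m + n]"
      using map_nth[of zs] that(1) by simp
    also have "\<dots> = xs @ ys"
      using that(2,3) upt_add_eq_append[of 0 m n] by simp
    finally show ?thesis .
  qed
  ultimately have
    "{zs. length zs = m + n \<and> sat zs (Conj (Rel {xs} [0..<m]) (Rel {ys} [m..<m + n]))} = {xs @ ys}"
    by auto
  moreover have "definable_over L A (m + n)
      {zs. length zs = m + n \<and> sat zs (Conj (Rel {xs} [0..<m]) (Rel {ys} [m..<m + n]))}"
    by (rule definable_over_form) (use assms \<open>length xs = m\<close> in auto)
  ultimately show ?thesis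
    by simp
qed

definition lift1 :: "'a set \<Rightarrow> 'a list set" where
  "lift1 t = (\<lambda>x. [x]) ` t"

lemma Cons_Nil_in_lift1_iff [simp]: "[x] \<in> lift1 t \<longleftrightarrow> x \<in> t"
  by (auto simp: lift1_def)

lemma lift1_singleton: "lift1 {x} = {[x]}"
  by (simp add: lift1_def)

lemma lift1_Int: "lift1 (s \<inter> t) = lift1 s \<inter> lift1 t"
  by (auto simp: lift1_def)

lemma length_Suc_0_set_eq_lift1: "{xs. length xs = Suc 0 \<and> Q xs} = lift1 {x. Q [x]}"
  by (auto simp: lift1_def length_Suc_conv)

lemma lift1_Compl: "{xs. length xs = Suc 0} - lift1 t = lift1 (- t)"
  by (auto simp: lift1_def length_Suc_conv)

lemma definable_over_form_1:
  "form_over L A 1 \<phi> \<Longrightarrow> definable_over L A 1 (lift1 {x. sat [x] \<phi>})"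
  using definable_over_form[of L A 1 \<phi>] by (simp add: length_Suc_0_set_eq_lift1)

section \<open>Closure, frontier and tameness in a dense linear order\<close>

definition order_closure :: "'a::linorder set \<Rightarrow> 'a set" where
  "order_closure t = {x. \<forall>a b. a < x \<and> x < b \<longrightarrow> (\<exists>y\<in>t. a < y \<and> y < b)}"

lemma order_closure_superset: "t \<subseteq> order_closure t"
  by (auto simp: order_closure_def)

lemma order_open_greaterThanLessThan: "order_open {a<..<b}"
proof -
  have "generate_topology (range lessThan \<union> range greaterThan) ({a<..} \<inter> {..<b})"
    by (intro generate_topology.Int generate_topology.Basis) auto
  then show ?thesis
    unfolding order_open_def by (simp add: greaterThanLessThan_eq)
qed

lemma order_open_imp_interval:
  fixes U :: "'a::linorder set"
  assumes unbounded: "\<And>x::'a. \<exists>l r. l < x \<and> x < r"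
    and "order_open U" and "x \<in> U"
  shows "\<exists>a b. a < x \<and> x < b \<and> {a<..<b} \<subseteq> U"
  using assms(2,3) unfolding order_open_def
proof (induction arbitrary: x rule: generate_topology.induct)
  case UNIV
  then show ?case
    using unbounded[of x] by blast
next
  case (Int U V)
  then obtain a1 b1 a2 b2 where "a1 < x" "x < b1" "{a1<..<b1} \<subseteq> U"
    and "a2 < x" "x < b2" "{a2<..<b2} \<subseteq> V"
    by (meson IntD1 IntD2)
  then show ?case
    by (intro exI[of _ "max a1 a2"] exI[of _ "min b1 b2"]) auto
next
  case (UN K)
  then show ?case
    by blast
next
  case (Basis U)
  obtain l r where lr: "l < x" "x < r"
    using unbounded[of x] by blast
  from Basis consider c where "U = {..<c}" "x < c" | c where "U = {c<..}" "c < x"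
    by auto
  then show ?case
  proof cases
    case (1 c)
    with lr show ?thesis
      by (intro exI[of _ l] exI[of _ c]) auto
  next
    case (2 c)
    with lr show ?thesis
      by (intro exI[of _ c] exI[of _ r]) auto
  qed
qed

lemma prod_closure_lift1:
  fixes t :: "'a::linorder set"
  assumes unbounded: "\<And>x::'a. \<exists>l r. l < x \<and> x < r"
  shows "prod_closure 1 (lift1 t) = lift1 (order_closure t)"
proof (intro set_eqI iffI)
  fix z assume z: "z \<in> prod_closure 1 (lift1 t)"
  then obtain x where x: "z = [x]"
    by (auto simp: prod_closure_def length_Suc_conv)
  have "\<exists>y\<in>t. a < y \<and> y < b" if "a < x" "x < b" for a b
    using z that order_open_greaterThanLessThan
    by (fastforce simp: prod_closure_def x lift1_def dest: spec[of _ "\<lambda>_. {a<..<b}"])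
  then show "z \<in> lift1 (order_closure t)"
    by (simp add: x order_closure_def)
next
  fix z assume "z \<in> lift1 (order_closure t)"
  then obtain x where x: "z = [x]" "x \<in> order_closure t"
    by (auto simp: lift1_def)
  have "\<exists>y\<in>t. y \<in> U" if U: "order_open U" "x \<in> U" for U
  proof -
    obtain a b where "a < x" "x < b" "{a<..<b} \<subseteq> U"
      using order_open_imp_interval[OF unbounded U] by blast
    with x(2) show ?thesis
      unfolding order_closure_def by fastforce
  qed
  then show "z \<in> prod_closure 1 (lift1 t)"
    by (fastforce simp: prod_closure_def x lift1_def)
qed

definition tame :: "'a::linorder set \<Rightarrow> 'a set \<Rightarrow> bool" where
  "tame E t \<longleftrightarrow> (\<forall>l r. {l<..<r} \<inter> E = {} \<longrightarrow> {l<..<r} \<subseteq> t \<or> {l<..<r} \<inter> t = {})"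

lemma tame_Compl: "tame E t \<Longrightarrow> tame E (- t)"
  unfolding tame_def by blast

lemma tame_Un: "tame E s \<Longrightarrow> tame E' t \<Longrightarrow> tame (E \<union> E') (s \<union> t)"
  unfolding tame_def by blast

lemma tame_Int: "tame E s \<Longrightarrow> tame E' t \<Longrightarrow> tame (E \<union> E') (s \<inter> t)"
  unfolding tame_def by blast

lemma tame_singleton: "tame {a} {a}"
  unfolding tame_def by auto

lemma tame_greaterThan: "tame {a} {a<..}"
  unfolding tame_def by auto

lemma tame_lessThan: "tame {b} {..<b}"
  unfolding tame_def by auto

lemma interval_or_point_imp_tame: "interval_or_point I \<Longrightarrow> \<exists>E. finite E \<and> tame E I"
  unfolding interval_or_point_def
proof (elim disjE exE)
  fix a
  assume "I = {a}"
  then show ?thesis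
    using tame_singleton by (intro exI[of _ "{a}"]) simp
next
  fix a b
  assume "I = {a<..<b}"
  then show ?thesis
    using tame_Int[OF tame_greaterThan tame_lessThan]
    by (intro exI[of _ "{a} \<union> {b}"]) (simp add: greaterThanLessThan_eq)
next
  fix a
  assume "I = {a<..}"
  then show ?thesis
    using tame_greaterThan by (intro exI[of _ "{a}"]) simp
next
  fix b
  assume "I = {..<b}"
  then show ?thesis
    using tame_lessThan by (intro exI[of _ "{b}"]) simp
next
  assume "I = UNIV"
  then show ?thesis
    by (intro exI[of _ "{}"]) (simp add: tame_def)
qed

lemma tame_finite_Union:
  assumes "finite F" and "\<forall>I\<in>F. interval_or_point I"
  shows "\<exists>E. finite E \<and> tame E (\<Union>F)"
  using assms
proof (induction rule: finite_induct)
  case empty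
  show ?case
    by (intro exI[of _ "{}"]) (simp add: tame_def)
next
  case (insert I F)
  then obtain E E' where "finite E" "tame E I" "finite E'" "tame E' (\<Union>F)"
    using interval_or_point_imp_tame by blast
  then show ?case
    using tame_Un[of E I E' "\<Union>F"] by (metis Union_insert finite_Un)
qed

text \<open>\<open>None\<close> stands for an infinite endpoint.\<close>

definition ointerval :: "'a::linorder option \<Rightarrow> 'a option \<Rightarrow> 'a set" where
  "ointerval lo hi = {y. pred_option (\<lambda>l. l < y) lo \<and> pred_option (\<lambda>h. y < h) hi}"

lemma finite_ointerval_around:
  fixes K :: "'a::linorder set"
  assumes "finite K" and "x \<notin> K"
  shows "\<exists>lo hi. set_option lo \<subseteq> K \<and> set_option hi \<subseteq> K \<and>
    x \<in> ointerval lo hi \<and> ointerval lo hi \<inter> K = {}"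
proof -
  define below where "below = {k\<in>K. k < x}"
  define above where "above = {k\<in>K. x < k}"
  define lo where "lo = (if below = {} then None else Some (Max below))"
  define hi where "hi = (if above = {} then None else Some (Min above))"
  have fin: "finite below" "finite above"
    using \<open>finite K\<close> by (simp_all add: below_def above_def)
  have "set_option lo \<subseteq> K" "set_option hi \<subseteq> K"
    using Max_in[OF fin(1)] Min_in[OF fin(2)] by (auto simp: lo_def hi_def below_def above_def)
  moreover have "x \<in> ointerval lo hi"
    using fin by (auto simp: ointerval_def lo_def hi_def below_def above_def)
  moreover have "k \<notin> ointerval lo hi" if "k \<in> K" for k
  proof
    assume k: "k \<in> ointerval lo hi"
    from that \<open>x \<notin> K\<close> consider "k \<in> below" | "k \<in> above"
      by (metis (mono_tags, lifting) below_def above_def linorder_neqE mem_Collect_eq)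
    then show False
    proof cases
      case 1
      then have "k \<le> Max below" "lo = Some (Max below)"
        using fin(1) by (auto simp: lo_def)
      with k show False
        by (auto simp: ointerval_def dest: leD)
    next
      case 2
      then have "Min above \<le> k" "hi = Some (Min above)"
        using fin(2) by (auto simp: hi_def)
      with k show False
        by (auto simp: ointerval_def dest: leD)
    qed
  qed
  ultimately show ?thesis
    by blast
qed

lemma interval_within_ointerval:
  fixes x y :: "'a::linorder"
  assumes unbounded: "\<And>x::'a. \<exists>l r. l < x \<and> x < r"
    and "x \<in> ointerval lo hi" and "y \<in> ointerval lo hi"
  obtains l r where "{l<..<r} \<subseteq> ointerval lo hi" and "x \<in> {l<..<r}" and "y \<in> {l<..<r}"
proof -
  obtain l0 r0 where "l0 < min x y" "max x y < r0"
    using unbounded[of "min x y"] unbounded[of "max x y"] by blast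
  define l where "l = (case lo of None \<Rightarrow> l0 | Some l \<Rightarrow> l)"
  define r where "r = (case hi of None \<Rightarrow> r0 | Some h \<Rightarrow> h)"
  have "{l<..<r} \<subseteq> ointerval lo hi"
    by (auto simp: ointerval_def l_def r_def split: option.splits)
  moreover have "x \<in> {l<..<r}" "y \<in> {l<..<r}"
    using assms(2,3) \<open>l0 < min x y\<close> \<open>max x y < r0\<close>
    by (auto simp: ointerval_def l_def r_def split: option.splits)
  ultimately show ?thesis
    using that by blast
qed

lemma tame_ointerval:
  fixes t :: "'a::linorder set"
  assumes unbounded: "\<And>x::'a. \<exists>l r. l < x \<and> x < r"
    and "tame K t" and "ointerval lo hi \<inter> K = {}"
  shows "ointerval lo hi \<subseteq> t \<or> ointerval lo hi \<inter> t = {}"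
proof (rule ccontr)
  assume "\<not> ?thesis"
  then obtain u v where u: "u \<in> ointerval lo hi" "u \<in> t" and v: "v \<in> ointerval lo hi" "v \<notin> t"
    by blast
  then obtain l r where "{l<..<r} \<subseteq> ointerval lo hi" "u \<in> {l<..<r}" "v \<in> {l<..<r}"
    using interval_within_ointerval[OF unbounded] by metis
  moreover from this(1) have "{l<..<r} \<inter> K = {}"
    using \<open>ointerval lo hi \<inter> K = {}\<close> by blast
  with \<open>tame K t\<close> have "{l<..<r} \<subseteq> t \<or> {l<..<r} \<inter> t = {}"
    by (simp add: tame_def)
  ultimately show False
    using u(2) v(2) by blast
qed

definition order_frontier :: "'a::linorder set \<Rightarrow> 'a set" where
  "order_frontier t = order_closure t \<inter> order_closure (- t)"

lemma order_frontier_Compl: "order_frontier (- t) = order_frontier t"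
  by (auto simp: order_frontier_def)

lemma order_frontier_subset:
  fixes t :: "'a::linorder set"
  assumes unbounded: "\<And>x::'a. \<exists>l r. l < x \<and> x < r"
    and "finite E" and "tame E t"
  shows "order_frontier t \<subseteq> E"
proof (rule ccontr)
  assume "\<not> ?thesis"
  then obtain x where x: "x \<in> order_frontier t" "x \<notin> E"
    by blast
  then obtain lo hi where "x \<in> ointerval lo hi" "ointerval lo hi \<inter> E = {}"
    using finite_ointerval_around[OF \<open>finite E\<close>] by blast
  moreover from this obtain l r where "{l<..<r} \<subseteq> ointerval lo hi" "x \<in> {l<..<r}"
    using interval_within_ointerval[OF unbounded] by metis
  ultimately have "{l<..<r} \<inter> E = {}" "l < x" "x < r"
    by auto
  then have "{l<..<r} \<subseteq> t \<or> {l<..<r} \<inter> t = {}"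
    using \<open>tame E t\<close> by (simp add: tame_def)
  moreover have "\<exists>y\<in>t. l < y \<and> y < r" "\<exists>y\<in>-t. l < y \<and> y < r"
    using x(1) \<open>l < x\<close> \<open>x < r\<close> by (auto simp: order_frontier_def order_closure_def)
  ultimately show False
    by auto
qed

lemma right_end_in_order_frontier:
  fixes t :: "'a::linorder set"
  assumes dense: "\<And>a b::'a. a < b \<Longrightarrow> \<exists>z. a < z \<and> z < b"
    and "u < q" and "{u<..<q} \<subseteq> t" and "q \<notin> t"
  shows "q \<in> order_frontier t"
proof -
  have "\<exists>y\<in>t. a < y \<and> y < b" if "a < q" "q < b" for a b
  proof -
    obtain z where "max a u < z" "z < q"
      using dense \<open>a < q\<close> \<open>u < q\<close> by (metis max_less_iff_conj)
    with assms(3) that show ?thesis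
      by (intro bexI[of _ z]) (auto intro: less_trans)
  qed
  then show ?thesis
    using \<open>q \<notin> t\<close> order_closure_superset[of "- t"]
    by (auto simp: order_frontier_def order_closure_def)
qed

lemma left_end_in_order_frontier:
  fixes t :: "'a::linorder set"
  assumes dense: "\<And>a b::'a. a < b \<Longrightarrow> \<exists>z. a < z \<and> z < b"
    and "u < q" and "{u<..<q} \<inter> t = {}" and "u \<in> t"
  shows "u \<in> order_frontier t"
proof -
  have "\<exists>y\<in>-t. a < y \<and> y < b" if "a < u" "u < b" for a b
  proof -
    obtain z where "u < z" "z < min b q"
      using dense \<open>u < b\<close> \<open>u < q\<close> by (metis min_less_iff_conj)
    with assms(3) that show ?thesis
      by (intro bexI[of _ z]) (auto intro: less_trans)
  qed
  then show ?thesis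
    using \<open>u \<in> t\<close> order_closure_superset[of t] by (auto simp: order_frontier_def order_closure_def)
qed

text \<open>Walking right from \<open>u\<close> through the finitely many points of \<open>E\<close> below \<open>v\<close>, the
  membership in \<open>t\<close> must switch somewhere; the switching point is a frontier point.\<close>

lemma order_frontier_between:
  fixes t :: "'a::linorder set"
  assumes dense: "\<And>a b::'a. a < b \<Longrightarrow> \<exists>z. a < z \<and> z < b"
    and "finite E" and "tame E t"
  shows "u < v \<Longrightarrow> u \<in> t \<Longrightarrow> v \<notin> t \<Longrightarrow> \<exists>p\<in>order_frontier t. u \<le> p \<and> p \<le> v"
proof (induction "card {e\<in>E. u < e \<and> e < v}" arbitrary: u rule: less_induct)
  case less
  define Q where "Q = insert v {e\<in>E. u < e \<and> e < v}"
  define q where "q = Min Q"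
  have "finite Q"
    using \<open>finite E\<close> by (simp add: Q_def)
  moreover have "Q \<noteq> {}"
    by (simp add: Q_def)
  ultimately have "q \<in> Q" and q_le: "\<And>e. e \<in> Q \<Longrightarrow> q \<le> e"
    unfolding q_def by (auto intro: Min_in Min_le)
  then have "u < q" "q \<le> v"
    using less.prems(1) by (auto simp: Q_def)
  have "e \<notin> E" if "u < e" "e < q" for e
  proof
    assume "e \<in> E"
    with that \<open>q \<le> v\<close> have "e \<in> Q"
      by (auto simp: Q_def intro: less_le_trans)
    with q_le that(2) show False
      by (auto dest: leD)
  qed
  then have "{u<..<q} \<inter> E = {}"
    by auto
  then consider "{u<..<q} \<subseteq> t" | "{u<..<q} \<inter> t = {}"
    using \<open>tame E t\<close> by (auto simp: tame_def)
  then show ?case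
  proof cases
    case 1
    show ?thesis
    proof (cases "q \<in> t")
      case True
      then have "q \<in> E" "q < v"
        using \<open>q \<in> Q\<close> less.prems(3) by (auto simp: Q_def)
      then have "{e\<in>E. q < e \<and> e < v} \<subset> {e\<in>E. u < e \<and> e < v}"
        using \<open>u < q\<close> by auto
      then have "card {e\<in>E. q < e \<and> e < v} < card {e\<in>E. u < e \<and> e < v}"
        using \<open>finite E\<close> by (intro psubset_card_mono) auto
      then show ?thesis
        using less.hyps \<open>q < v\<close> True less.prems(3) \<open>u < q\<close> by (meson order.trans less_imp_le)
    next
      case False
      with 1 have "q \<in> order_frontier t"
        using right_end_in_order_frontier[OF dense \<open>u < q\<close>] by blast
      with \<open>u < q\<close> \<open>q \<le> v\<close> show ?thesis
        by (auto intro: less_imp_le)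
    qed
  next
    case 2
    then have "u \<in> order_frontier t"
      using left_end_in_order_frontier[OF dense \<open>u < q\<close>] less.prems(2) by blast
    with less.prems(1) show ?thesis
      by (auto intro: less_imp_le)
  qed
qed

lemma tame_order_frontier:
  fixes t :: "'a::linorder set"
  assumes dense: "\<And>a b::'a. a < b \<Longrightarrow> \<exists>z. a < z \<and> z < b"
    and "finite E" and "tame E t"
  shows "tame (order_frontier t) t"
  unfolding tame_def
proof (intro allI impI)
  fix l r
  assume free: "{l<..<r} \<inter> order_frontier t = {}"
  have False if u: "u \<in> {l<..<r}" "u \<in> t" and v: "v \<in> {l<..<r}" "v \<notin> t" for u v
  proof -
    have "u \<noteq> v"
      using u v by auto
    then consider "u < v" | "v < u"
      by (meson linorder_neqE)
    then show False
    proof cases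
      case 1
      then obtain p where "p \<in> order_frontier t" "u \<le> p" "p \<le> v"
        using order_frontier_between[OF dense \<open>finite E\<close> \<open>tame E t\<close>] u v by blast
      with u v free show False
        by (metis IntI empty_iff greaterThanLessThan_iff le_less_trans less_le_trans)
    next
      case 2
      then obtain p where "p \<in> order_frontier t" "v \<le> p" "p \<le> u"
        using order_frontier_between[OF dense \<open>finite E\<close> tame_Compl[OF \<open>tame E t\<close>]] u v
        by (auto simp: order_frontier_Compl)
      with u v free show False
        by (metis IntI empty_iff greaterThanLessThan_iff le_less_trans less_le_trans)
    qed
  qed
  then show "{l<..<r} \<subseteq> t \<or> {l<..<r} \<inter> t = {}"
    by blast
qed

section \<open>O-minimal expansions of ordered groups\<close>

definition less_rel :: "'a::linorder list set" where
  "less_rel = {[x, y] |x y. x < y}"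

definition plus_rel :: "'a::plus list set" where
  "plus_rel = {[x, y, x + y] |x y. True}"

lemma Cons_Nil_in_less_rel [simp]: "[a, b] \<in> less_rel \<longleftrightarrow> a < b"
  by (auto simp: less_rel_def)

lemma Cons_Nil_in_plus_rel [simp]: "[a, b, c] \<in> plus_rel \<longleftrightarrow> c = a + b"
  by (auto simp: plus_rel_def)

lemma mem_dcl_iff: "b \<in> dcl L A \<longleftrightarrow> definable_over L A (Suc 0) {[b]}"
  by (simp add: dcl_def)

lemma mem_dcl_by_form: "form_over L A 1 \<phi> \<Longrightarrow> {x. sat [x] \<phi>} = {b} \<Longrightarrow> b \<in> dcl L A"
  using definable_over_form_1[of L A \<phi>] by (simp add: dcl_def lift1_singleton)

lemma finite_subset_dcl:
  fixes K :: "'a::linorder set"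
  assumes "finite K" and "definable_over L A 1 (lift1 K)"
    and less_rel: "definable_over L A (Suc (Suc 0)) less_rel"
  shows "K \<subseteq> dcl L A"
  using assms(1,2)
proof (induction "card K" arbitrary: K rule: less_induct)
  case less
  show ?case
  proof (cases "K = {}")
    case False
    define m where "m = Min K"
    have "m \<in> K" "\<forall>k\<in>K. m \<le> k"
      using less.prems(1) False by (simp_all add: m_def)
    then have "{x. sat [x] (Conj (Rel (lift1 K) [0])
        (Neg (Ex (Conj (Rel (lift1 K) [1]) (Rel less_rel [1, 0])))))} = {m}"
      by (auto dest: leD intro: order.antisym simp: not_less)
    then have "m \<in> dcl L A"
      by (rule mem_dcl_by_form[rotated]) (use less.prems(2) less_rel in simp)
    moreover have "K - {m} \<subseteq> dcl L A"
    proof (rule less.hyps)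
      show "card (K - {m}) < card K"
        using less.prems(1) \<open>m \<in> K\<close> by (rule card_Diff1_less)
      have "definable_over L A 1
          (lift1 {x. sat [x] (Conj (Rel (lift1 K) [0]) (Neg (Rel {[m]} [0])))})"
        by (rule definable_over_form_1) (use less.prems(2) \<open>m \<in> dcl L A\<close> in \<open>simp add: mem_dcl_iff\<close>)
      then show "definable_over L A 1 (lift1 (K - {m}))"
        by (simp add: set_diff_eq)
    qed (use less.prems(1) in simp)
    ultimately show ?thesis
      by blast
  qed simp
qed

lemma interval_or_point_ray_or_bdd_above:
  fixes I :: "'a::linorder set"
  assumes "interval_or_point I"
  shows "(\<exists>a. {a<..} \<subseteq> I) \<or> (\<exists>B. \<forall>x\<in>I. x \<le> B)"
  using assms unfolding interval_or_point_def
proof (elim disjE exE)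
  fix a b
  assume "I = {a<..<b}"
  then have "\<forall>x\<in>I. x \<le> b"
    by (auto intro: less_imp_le)
  then show ?thesis
    by blast
next
  fix b
  assume "I = {..<b}"
  then have "\<forall>x\<in>I. x \<le> b"
    by (auto intro: less_imp_le)
  then show ?thesis
    by blast
next
  assume "I = UNIV"
  then show ?thesis
    by blast
qed auto

lemma finite_Union_ray_or_bdd_above:
  fixes F :: "'a::linorder set set"
  assumes "finite F" and "\<forall>I\<in>F. interval_or_point I"
  shows "(\<exists>a. {a<..} \<subseteq> \<Union>F) \<or> (\<exists>B. \<forall>x\<in>\<Union>F. x \<le> B)"
  using assms
proof (induction rule: finite_induct)
  case (insert I F)
  then have "(\<exists>a. {a<..} \<subseteq> I) \<or> (\<exists>B. \<forall>x\<in>I. x \<le> B)"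
    and "(\<exists>a. {a<..} \<subseteq> \<Union>F) \<or> (\<exists>B. \<forall>x\<in>\<Union>F. x \<le> B)"
    using interval_or_point_ray_or_bdd_above by auto
  then consider "\<exists>a. {a<..} \<subseteq> I \<union> \<Union>F" | B B' where "\<forall>x\<in>I. x \<le> B" "\<forall>x\<in>\<Union>F. x \<le> B'"
    by blast
  then show ?case
  proof cases
    case (2 B B')
    then have "\<forall>x\<in>\<Union>(insert I F). x \<le> max B B'"
      by (auto simp: le_max_iff_disj)
    then show ?thesis
      by blast
  qed auto
qed simp

lemma double_inject:
  fixes a b :: "'a::linordered_ab_group_add"
  shows "a + a = b + b \<Longrightarrow> a = b"
  by (metis add_strict_mono less_irrefl linorder_neqE)

lemma exists_double_greater:
  fixes B e :: "'a::linordered_ab_group_add"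
  assumes "0 < e"
  shows "\<exists>y. B < y + y"
proof -
  define y where "y = max B 0 + e"
  have "max B 0 < y"
    using assms by (simp add: y_def)
  then have "B < y" "0 < y"
    by simp_all
  then have "B < y + y"
    by (simp add: order_less_le_trans)
  then show ?thesis
    by blast
qed

lemma midpoint_between:
  fixes a b z :: "'a::linordered_ab_group_add"
  assumes "a < b" and "z + z = a + b"
  shows "a < z" and "z < b"
proof -
  have "a + a < z + z" "z + z < b + b"
    using assms by (simp_all add: add_strict_mono)
  then show "a < z" "z < b"
    by (meson add_mono not_le)+
qed

context
  fixes L :: "(nat \<times> 'a::linordered_ab_group_add list set) set" and one :: 'a
  assumes omin: "omin_group_expansion L one"
begin

lemma omin_group_one_pos: "0 < one"
  using omin by (simp add: omin_group_expansion_def)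

lemma omin_group_o_minimal: "o_minimal L"
  using omin by (simp add: omin_group_expansion_def)

lemma o_minimal_decomposition:
  assumes "definable_over L UNIV 1 (lift1 s)"
  obtains F where "finite F" and "\<forall>I\<in>F. interval_or_point I" and "s = \<Union>F"
proof -
  have "{x. [x] \<in> lift1 s} = s"
    by simp
  with omin_group_o_minimal assms show ?thesis
    unfolding o_minimal_def by (metis that)
qed

lemma definable_over_less_rel: "definable_over L A (Suc (Suc 0)) less_rel"
  using omin by (intro definable_over_basic)
    (auto simp: omin_group_expansion_def less_rel_def numeral_2_eq_2)

lemma definable_over_plus_rel: "definable_over L A (Suc (Suc (Suc 0))) plus_rel"
  using omin by (intro definable_over_basic)
    (auto simp: omin_group_expansion_def plus_rel_def numeral_3_eq_3)

lemma zero_in_dcl: "0 \<in> dcl L A"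
  unfolding dcl_def using omin by (simp add: omin_group_expansion_def definable_over_basic)

lemma one_in_dcl: "one \<in> dcl L A"
  unfolding dcl_def using omin by (simp add: omin_group_expansion_def definable_over_basic)

text \<open>The doubles form a definable subgroup; by o-minimality it is a finite union of
  intervals, and being unbounded above it contains a ray, hence everything.\<close>

lemma omin_group_exists_half: "\<exists>y. y + y = (x::'a)"
proof -
  define D where "D = {x. \<exists>y. y + y = (x::'a)}"
  have "{x. sat [x] (Ex (Rel plus_rel [1, 1, 0]))} = D"
    by (auto simp: D_def eq_commute)
  moreover have "definable_over L UNIV 1 (lift1 {x. sat [x] (Ex (Rel plus_rel [1, 1, 0]))})"
    by (intro definable_over_form_1) (simp add: definable_over_plus_rel)
  ultimately obtain F where F: "finite F" "\<forall>I\<in>F. interval_or_point I" "D = \<Union>F"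
    using o_minimal_decomposition by metis
  have "\<not> (\<exists>B. \<forall>x\<in>D. x \<le> B)"
    using exists_double_greater[OF omin_group_one_pos] by (force simp: D_def dest: leD)
  then obtain a where a: "{a<..} \<subseteq> D"
    using finite_Union_ray_or_bdd_above[OF F(1,2)] unfolding F(3) by blast
  obtain y where "a - x < y + y"
    using exists_double_greater[OF omin_group_one_pos] by blast
  then have "a < x + (y + y)"
    by (simp add: diff_less_eq add.commute)
  with a obtain w where "w + w = x + (y + y)"
    by (auto simp: D_def)
  then have "(w - y) + (w - y) = x"
    by (simp add: algebra_simps)
  then show ?thesis
    by blast
qed

lemma omin_group_dense: "a < b \<Longrightarrow> \<exists>z. a < z \<and> z < (b::'a)"
proof -
  assume "a < b"
  obtain z where "z + z = a + b"
    using omin_group_exists_half by blast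
  with \<open>a < b\<close> show ?thesis
    using midpoint_between by blast
qed

lemma omin_group_unbounded: "\<exists>l r. l < x \<and> x < (r::'a)"
  using omin_group_one_pos by (intro exI[of _ "x - one"] exI[of _ "x + one"]) simp

lemma add_in_dcl: "a \<in> dcl L A \<Longrightarrow> b \<in> dcl L A \<Longrightarrow> a + b \<in> dcl L A"
  by (rule mem_dcl_by_form[where \<phi> = "Ex (Ex (Conj (Rel {[a]} [1])
      (Conj (Rel {[b]} [2]) (Rel plus_rel [1, 2, 0]))))"])
    (auto simp: mem_dcl_iff definable_over_plus_rel)

lemma diff_in_dcl: "a \<in> dcl L A \<Longrightarrow> b \<in> dcl L A \<Longrightarrow> a - b \<in> dcl L A"
  by (rule mem_dcl_by_form[where \<phi> = "Ex (Ex (Conj (Rel {[a]} [1])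
      (Conj (Rel {[b]} [2]) (Rel plus_rel [0, 2, 1]))))"])
    (auto simp: mem_dcl_iff definable_over_plus_rel)

lemma half_in_dcl: "z + z \<in> dcl L A \<Longrightarrow> z \<in> dcl L A"
  by (rule mem_dcl_by_form[where \<phi> = "Ex (Conj (Rel {[z + z]} [1]) (Rel plus_rel [0, 0, 1]))"])
    (auto simp: mem_dcl_iff definable_over_plus_rel dest: double_inject)

lemma ointerval_meets_dcl:
  assumes "set_option lo \<subseteq> dcl L A" and "set_option hi \<subseteq> dcl L A"
    and "ointerval lo hi \<noteq> {}"
  shows "\<exists>z\<in>ointerval lo hi. z \<in> dcl L A"
proof (cases lo)
  case None
  show ?thesis
  proof (cases hi)
    case None
    with \<open>lo = None\<close> show ?thesis
      using zero_in_dcl by (auto simp: ointerval_def)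
  next
    case (Some h)
    with \<open>lo = None\<close> assms(2) show ?thesis
      using omin_group_one_pos diff_in_dcl[OF _ one_in_dcl, of h]
      by (intro bexI[of _ "h - one"]) (auto simp: ointerval_def)
  qed
next
  case (Some l)
  show ?thesis
  proof (cases hi)
    case None
    with \<open>lo = Some l\<close> assms(1) show ?thesis
      using omin_group_one_pos add_in_dcl[OF _ one_in_dcl, of l]
      by (intro bexI[of _ "l + one"]) (auto simp: ointerval_def)
  next
    case (Some h)
    obtain z where z: "z + z = l + h"
      using omin_group_exists_half by blast
    have "l < h"
      using assms(3) \<open>lo = Some l\<close> \<open>hi = Some h\<close> by (auto simp: ointerval_def)
    then have "l < z" "z < h"
      using z by (rule midpoint_between)+
    moreover have "z \<in> dcl L A"
      using assms(1,2) \<open>lo = Some l\<close> \<open>hi = Some h\<close> z half_in_dcl add_in_dcl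
      by (metis option.set_intros subsetD)
    ultimately show ?thesis
      using \<open>lo = Some l\<close> \<open>hi = Some h\<close> by (auto simp: ointerval_def)
  qed
qed

end

section \<open>Points in the definable closure\<close>

lemma subset_expand: "L \<subseteq> expand L P"
  by (auto simp: expand_def)

context
  fixes L :: "(nat \<times> 'a::linordered_ab_group_add list set) set" and one :: 'a and P C :: "'a set"
  assumes omin: "omin_group_expansion L one"
    and OP: "OP L P" and indep: "dcl_indep L (C - P) P"
begin

lemma definable_over_order_closure:
  "definable_over (expand L P) C 1 (lift1 t) \<Longrightarrow> definable_over L C 1 (lift1 (order_closure t))"
  using OP indep prod_closure_lift1[OF omin_group_unbounded[OF omin]] unfolding OP_def by metis

lemma order_frontier_subset_dcl:
  assumes "definable_over L UNIV 1 (lift1 s)" and "definable_over (expand L P) C 1 (lift1 s)"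
  shows "finite (order_frontier s)" and "order_frontier s \<subseteq> dcl L C"
    and "tame (order_frontier s) s"
proof -
  obtain F where "finite F" "\<forall>I\<in>F. interval_or_point I" "s = \<Union>F"
    using o_minimal_decomposition[OF omin assms(1)] by blast
  then obtain E where "finite E" "tame E s"
    using tame_finite_Union by blast
  then have "order_frontier s \<subseteq> E"
    by (intro order_frontier_subset[OF omin_group_unbounded[OF omin]])
  with \<open>finite E\<close> show "finite (order_frontier s)"
    by (rule finite_subset[rotated])
  show "tame (order_frontier s) s"
    using tame_order_frontier[OF omin_group_dense[OF omin] \<open>finite E\<close> \<open>tame E s\<close>] .
  have "definable_over (expand L P) C 1 (lift1 (- s))"
    using definable_over_diff[OF assms(2)] by (simp add: lift1_Compl)
  then have "definable_over L C 1 (lift1 (order_frontier s))"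
    using definable_over_Int[OF definable_over_order_closure[OF assms(2)]
        definable_over_order_closure] by (simp add: order_frontier_def lift1_Int)
  with \<open>finite (order_frontier s)\<close> show "order_frontier s \<subseteq> dcl L C"
    using finite_subset_dcl definable_over_less_rel[OF omin] by blast
qed

lemma exists_dcl_point:
  assumes "definable_over L UNIV 1 (lift1 s)" and "definable_over (expand L P) C 1 (lift1 s)"
    and "s \<noteq> {}"
  shows "\<exists>y\<in>s. y \<in> dcl L C"
proof -
  define K where "K = order_frontier s"
  have "finite K" "K \<subseteq> dcl L C" "tame K s"
    unfolding K_def by (fact order_frontier_subset_dcl[OF assms(1,2)])+
  obtain x where "x \<in> s"
    using assms(3) by blast
  show ?thesis
  proof (cases "x \<in> K")
    case True
    with \<open>x \<in> s\<close> \<open>K \<subseteq> dcl L C\<close> show ?thesis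
      by blast
  next
    case False
    then obtain lo hi where "set_option lo \<subseteq> K" "set_option hi \<subseteq> K"
      and "x \<in> ointerval lo hi" "ointerval lo hi \<inter> K = {}"
      using finite_ointerval_around[OF \<open>finite K\<close>] by blast
    then have "ointerval lo hi \<subseteq> s"
      using tame_ointerval[OF omin_group_unbounded[OF omin] \<open>tame K s\<close>] \<open>x \<in> s\<close> by blast
    moreover obtain z where "z \<in> ointerval lo hi" "z \<in> dcl L C"
      using ointerval_meets_dcl[OF omin] \<open>K \<subseteq> dcl L C\<close> \<open>set_option lo \<subseteq> K\<close>
        \<open>set_option hi \<subseteq> K\<close> \<open>x \<in> ointerval lo hi\<close> by (metis empty_iff subset_trans)
    ultimately show ?thesis
      by blast
  qed
qed

lemma exists_dcl_tuple:
  "B \<noteq> {} \<Longrightarrow> definable_over L UNIV k B \<Longrightarrow> definable_over (expand L P) C k B \<Longrightarrow>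
    \<exists>cs\<in>B. definable_over L C k {cs}"
proof (induction k arbitrary: B)
  case 0
  then have "[] \<in> B"
    by (auto dest: definable_over_length)
  then show ?case
    using definable_over_Nil by blast
next
  case (Suc k)
  let ?B' = "{xs. \<exists>y. xs @ [y] \<in> B}"
  obtain zs where "zs \<in> B"
    using Suc.prems(1) by blast
  moreover have "zs \<noteq> []"
    using definable_over_length[OF Suc.prems(2) \<open>zs \<in> B\<close>] by auto
  ultimately have "butlast zs \<in> ?B'"
    by (metis (mono_tags, lifting) append_butlast_last_id mem_Collect_eq)
  then have "?B' \<noteq> {}"
    by blast
  moreover have "definable_over L UNIV k ?B'" "definable_over (expand L P) C k ?B'"
    using Suc.prems(2,3) by (simp_all add: definable_over_proj)
  ultimately obtain cs where cs: "cs \<in> ?B'" "definable_over L C k {cs}"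
    using Suc.IH[of ?B'] by blast
  let ?s = "{y. cs @ [y] \<in> B}"
  have fibre: "definable_over L' A 1 (lift1 ?s)"
    if "definable_over L' A (k + 1) B" "definable_over L' A k {cs}" for L' A
    using definable_over_fibre_left[OF that] by (simp add: length_Suc_0_set_eq_lift1)
  have "definable_over L UNIV k {cs}" "definable_over (expand L P) C k {cs}"
    using definable_over_mono[OF cs(2) order_refl subset_UNIV]
      definable_over_mono[OF cs(2) subset_expand order_refl] by simp_all
  moreover have "?s \<noteq> {}"
    using cs(1) by blast
  ultimately obtain y where "y \<in> ?s" "y \<in> dcl L C"
    using exists_dcl_point[OF fibre fibre] Suc.prems(2,3) by auto
  then have "definable_over L C (k + 1) {cs @ [y]}"
    using definable_over_append[OF cs(2), of 1 "[y]"] by (simp add: dcl_def)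
  with \<open>y \<in> ?s\<close> show ?case
    by auto
qed

end

theorem lemma3p2:
  fixes L :: "(nat \<times> 'a::linordered_ab_group_add list set) set"
    and one :: 'a and P C :: "'a set" and n :: nat and X :: "'a list set"
  assumes "omin_group_expansion L one"
    and "OP L P"
    and "dcl_indep L (C - P) P"
    and "definable_over L UNIV n X"
    and "definable_over (expand L P) C n X"
  shows "definable_over L C n X"
proof -
  obtain m Y bs where Y: "fodef L (n + m) Y" "length bs = m"
    and X: "X = {xs. length xs = n \<and> xs @ bs \<in> Y}"
    using assms(4) unfolding definable_over_def by blast
  define B where "B = {cs. length cs = m \<and> {xs. length xs = n \<and> xs @ cs \<in> Y} = X}"
  have "bs \<in> B"
    using Y(2) X by (simp add: B_def)
  moreover have "definable_over L UNIV m B" "definable_over (expand L P) C m B"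
    unfolding B_def using Y(1) assms(4,5) subset_expand by (blast intro: definable_over_parameters)+
  ultimately obtain cs where "cs \<in> B" "definable_over L C m {cs}"
    using exists_dcl_tuple[OF assms(1-3)] by blast
  then show ?thesis
    using definable_over_fibre_right[OF fodef_imp_definable_over[OF Y(1)]] by (auto simp: B_def)
qed

end
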